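(* Let $A$ be a locally-complex Cayley--Dickson algebra and $f(x)\in A[x]$. Then every root in $A$ of $f'(x)$ is contained in the Gauss--Lucas snail $\mathrm{sn}(f)$.
   Context: Real Cayley--Dickson algebras: $A_0=\mathbb{R}$ with identity involution, $A_{k+1}=A_k\{\gamma_k\}=A_k\times A_k$ with product $(a,b)(c,d)=(ac+\gamma_k\bar d b,\ da+b\bar c)$ and involution $\overline{(a,b)}=(\bar a,-b)$. A real unital algebra is locally-complex if every non-real element generates a subalgebra isomorphic to $\mathbb{C}$ (for Cayley--Dickson algebras: all $\gamma_k=-1$ up to isomorphism). Trace $\mathrm{tr}(\lambda)=\lambda+\bar\lambda$, norm $\mathrm{n}(\lambda)=\bar\lambda\lambda$; $\langle\cdot,\cdot\rangle$ is the Euclidean inner product with $\langle a,a\rangle=\mathrm{n}(a)$. For $I$ with trace $0$ and norm $1$, $\mathbb{C}_I=\mathbb{R}+\mathbb{R}I\cong\mathbb{C}$ and $\pi_I:A\to\mathbb{C}_I$ is the orthogonal projection. $A[x]=A\otimes_{\mathbb{R}}\mathbb{R}[x]$ with central $x$; for $f(x)=\sum_k a_kx^k$, $f_I(x)=\sum_k\pi_I(a_k)x^k\in\mathbb{C}_I[x]$; substitution $f(r)=\sum_k a_k(r^k)$; formal derivative $f'(x)=\sum_k ka_kx^{k-1}$. If $f_I$ is non-constant, $K_{\mathbb{C}_I}(f_I)$ is the convex hull in $\mathbb{C}_I$ of the roots of $f_I$ in $\mathbb{C}_I$; otherwise $K_{\mathbb{C}_I}(f_I)=\mathbb{C}_I$.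 The Gauss--Lucas snail is $\mathrm{sn}(f)=\bigcup_I K_{\mathbb{C}_I}(f_I)$, the union over all $I\in A$ with $\mathrm{tr}(I)=0$, $\mathrm{n}(I)=1$. *)

theory Defs
  imports "HOL-Analysis.Analysis" "HOL-Computational_Algebra.Polynomial"
begin

text \<open>The locally-complex Cayley--Dickson algebra A_n (all gamma_k = -1) of real dimension 2^n.
  Elements are real lists of length 2^n; an element of A_(n+1) is the concatenation a @ b
  of its two halves a, b in A_n.\<close>

definition cd_carrier :: "nat \<Rightarrow> real list set" where
  "cd_carrier n = {xs. length xs = 2 ^ n}"

definition cd_add :: "real list \<Rightarrow> real list \<Rightarrow> real list" where
  "cd_add xs ys = map2 (+) xs ys"

definition cd_neg :: "real list \<Rightarrow> real list" where
  "cd_neg xs = map uminus xs"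

definition cd_scale :: "real \<Rightarrow> real list \<Rightarrow> real list" where
  "cd_scale r xs = map ((*) r) xs"

definition cd_zero :: "nat \<Rightarrow> real list" where
  "cd_zero n = replicate (2 ^ n) 0"

definition cd_one :: "nat \<Rightarrow> real list" where
  "cd_one n = 1 # replicate (2 ^ n - 1) 0"

fun cd_conj :: "nat \<Rightarrow> real list \<Rightarrow> real list" where
  "cd_conj 0 xs = xs"
| "cd_conj (Suc n) xs = cd_conj n (take (2 ^ n) xs) @ cd_neg (drop (2 ^ n) xs)"

text \<open>Product: (a,b)(c,d) = (ac + gamma conj(d) b, da + b conj(c)) with gamma = -1.\<close>
fun cd_mult :: "nat \<Rightarrow> real list \<Rightarrow> real list \<Rightarrow> real list" where
  "cd_mult 0 xs ys = [hd xs * hd ys]"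
| "cd_mult (Suc n) xs ys =
     (let a = take (2 ^ n) xs; b = drop (2 ^ n) xs;
          c = take (2 ^ n) ys; d = drop (2 ^ n) ys
      in cd_add (cd_mult n a c) (cd_neg (cd_mult n (cd_conj n d) b))
         @ cd_add (cd_mult n d a) (cd_mult n b (cd_conj n c)))"

text \<open>Euclidean inner product (coordinatewise), satisfying <a,a> = n(a).\<close>
definition cd_inner :: "real list \<Rightarrow> real list \<Rightarrow> real" where
  "cd_inner xs ys = sum_list (map2 (*) xs ys)"

definition cd_trace :: "nat \<Rightarrow> real list \<Rightarrow> real list" where
  "cd_trace n x = cd_add x (cd_conj n x)"

definition cd_norm :: "nat \<Rightarrow> real list \<Rightarrow> real list" where
  "cd_norm n x = cd_mult n (cd_conj n x) x"

definition cd_units :: "nat \<Rightarrow> real list set" where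
  "cd_units n = {I \<in> cd_carrier n. cd_trace n I = cd_zero n \<and> cd_norm n I = cd_one n}"

text \<open>Powers r^k (A is power-associative).\<close>
fun cd_pow :: "nat \<Rightarrow> real list \<Rightarrow> nat \<Rightarrow> real list" where
  "cd_pow n r 0 = cd_one n"
| "cd_pow n r (Suc k) = cd_mult n r (cd_pow n r k)"

text \<open>Polynomials in A[x]: coefficient lists [a_0, a_1, ...]; substitution f(r) = sum a_k (r^k).\<close>
definition cd_eval :: "nat \<Rightarrow> real list list \<Rightarrow> real list \<Rightarrow> real list" where
  "cd_eval n fs r =
     foldr cd_add (map (\<lambda>k. cd_mult n (fs ! k) (cd_pow n r k)) [0..<length fs]) (cd_zero n)"

definition cd_pderiv :: "real list list \<Rightarrow> real list list" where
  "cd_pderiv fs = map (\<lambda>k. cd_scale (real k) (fs ! k)) [1..<length fs]"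

definition cd_embed :: "nat \<Rightarrow> real list \<Rightarrow> complex \<Rightarrow> real list" where
  "cd_embed n I z = cd_add (cd_scale (Re z) (cd_one n)) (cd_scale (Im z) I)"

text \<open>Orthogonal projection pi_I onto C_I = span{1, I} (1, I orthonormal), expressed through
  the identification: pi_I(a) = cd_embed n I (Complex <a,1> <a,I>).\<close>
definition cd_proj_coord :: "nat \<Rightarrow> real list \<Rightarrow> real list \<Rightarrow> complex" where
  "cd_proj_coord n I a = Complex (cd_inner a (cd_one n)) (cd_inner a I)"

text \<open>f_I in C_I[x], transported to complex[x].\<close>
definition cd_fI :: "nat \<Rightarrow> real list \<Rightarrow> real list list \<Rightarrow> complex poly" where
  "cd_fI n I fs = Poly (map (cd_proj_coord n I) fs)"

definition cd_K :: "nat \<Rightarrow> real list \<Rightarrow> real list list \<Rightarrow> real list set" where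
  "cd_K n I fs =
     (if degree (cd_fI n I fs) > 0
      then cd_embed n I ` (convex hull {z. poly (cd_fI n I fs) z = 0})
      else cd_embed n I ` UNIV)"

definition cd_snail :: "nat \<Rightarrow> real list list \<Rightarrow> real list set" where
  "cd_snail n fs = (\<Union>I \<in> cd_units n. cd_K n I fs)"

end

theory Submission
  imports Defs "HOL-Computational_Algebra.Fundamental_Theorem_Algebra"
begin

text \<open>
  Every element \<open>r\<close> of the algebra lies in a complex line \<open>\<complex>\<^sub>J = \<real> + \<real>J\<close> for some
  imaginary unit \<open>J\<close> (the normalised imaginary part of \<open>r\<close>, or any unit if \<open>r\<close> is real),
  say \<open>r = x + yJ\<close> with \<open>z = x + iy\<close>. The line \<open>\<complex>\<^sub>J\<close> is a subalgebra isomorphic to \<open>\<complex>\<close>, so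
  \<open>r\<^sup>k\<close> corresponds to \<open>z\<^sup>k\<close>, and the orthogonal projection \<open>\<pi>\<^sub>J\<close> satisfies
  \<open>\<pi>\<^sub>J(a w) = \<pi>\<^sub>J(a) w\<close> for \<open>w \<in> \<complex>\<^sub>J\<close>. Projecting \<open>f'(r) = 0\<close> therefore gives
  \<open>f\<^sub>J'(z) = 0\<close>, and the classical Gauss--Lucas theorem puts \<open>z\<close> into the convex hull of the
  roots of \<open>f\<^sub>J\<close>. Although the product is not associative, the projection identity only
  needs that the real part (coordinate 0) of a product is commutative and associative, which
  holds at every level of the Cayley--Dickson doubling.
\<close>

lemma length_cd_add [simp]: "length (cd_add x y) = min (length x) (length y)"
  by (simp add: cd_add_def)

lemma length_cd_neg [simp]: "length (cd_neg x) = length x"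
  by (simp add: cd_neg_def)

lemma length_cd_scale [simp]: "length (cd_scale c x) = length x"
  by (simp add: cd_scale_def)

lemma length_cd_mult [simp]: "length (cd_mult n x y) = 2 ^ n"
  by (induction n arbitrary: x y) (simp_all add: Let_def)

lemma length_cd_conj [simp]: "length x = 2 ^ n \<Longrightarrow> length (cd_conj n x) = 2 ^ n"
  by (induction n arbitrary: x) simp_all

lemma length_cd_zero [simp]: "length (cd_zero n) = 2 ^ n"
  by (simp add: cd_zero_def)

lemma length_cd_one [simp]: "length (cd_one n) = 2 ^ n"
  by (simp add: cd_one_def)

lemma nth_cd_add [simp]: "i < length x \<Longrightarrow> i < length y \<Longrightarrow> cd_add x y ! i = x ! i + y ! i"
  by (simp add: cd_add_def)

lemma nth_cd_neg [simp]: "i < length x \<Longrightarrow> cd_neg x ! i = - x ! i"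
  by (simp add: cd_neg_def)

lemma nth_cd_scale [simp]: "i < length x \<Longrightarrow> cd_scale c x ! i = c * x ! i"
  by (simp add: cd_scale_def)

lemma nth_cd_zero [simp]: "i < 2 ^ n \<Longrightarrow> cd_zero n ! i = 0"
  by (simp add: cd_zero_def)

lemma nth_cd_one: "i < 2 ^ n \<Longrightarrow> cd_one n ! i = (if i = 0 then 1 else 0)"
  by (simp add: cd_one_def nth_Cons')

lemma cd_neg_eq_scale: "cd_neg x = cd_scale (-1) x"
  by (simp add: cd_neg_def cd_scale_def)

lemma cd_add_append [simp]:
  "length a = length c \<Longrightarrow> cd_add (a @ b) (c @ d) = cd_add a c @ cd_add b d"
  by (simp add: cd_add_def)

lemma cd_neg_neg [simp]: "cd_neg (cd_neg x) = x"
  by (simp add: cd_neg_def comp_def)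

lemma cd_neg_append [simp]: "cd_neg (a @ b) = cd_neg a @ cd_neg b"
  by (simp add: cd_neg_def)

lemma cd_scale_append [simp]: "cd_scale c (a @ b) = cd_scale c a @ cd_scale c b"
  by (simp add: cd_scale_def)

lemma cd_one_0: "cd_one 0 = [1]"
  by (simp add: cd_one_def)

lemma cd_one_Suc: "cd_one (Suc n) = cd_one n @ cd_zero n"
  by (simp add: cd_one_def cd_zero_def mult_2 flip: replicate_add)

lemma length_Suc_halves:
  assumes "length x = 2 ^ Suc n"
  obtains a b where "x = a @ b" "length a = 2 ^ n" "length b = 2 ^ n"
  using assms by (intro that[of "take (2 ^ n) x" "drop (2 ^ n) x"]) simp_all

section \<open>Identities of the Cayley--Dickson product\<close>

lemma cd_conj_add [simp]:
  "length x = 2 ^ n \<Longrightarrow> length y = 2 ^ n \<Longrightarrow>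
    cd_conj n (cd_add x y) = cd_add (cd_conj n x) (cd_conj n y)"
proof (induction n arbitrary: x y)
  case (Suc n)
  obtain a b where "x = a @ b" "length a = 2 ^ n" "length b = 2 ^ n"
    using Suc.prems(1) by (rule length_Suc_halves)
  moreover obtain c d where "y = c @ d" "length c = 2 ^ n" "length d = 2 ^ n"
    using Suc.prems(2) by (rule length_Suc_halves)
  ultimately show ?case using Suc.IH
    by (auto intro!: nth_equalityI)
qed simp

lemma cd_conj_scale [simp]:
  "length x = 2 ^ n \<Longrightarrow> cd_conj n (cd_scale c x) = cd_scale c (cd_conj n x)"
proof (induction n arbitrary: x)
  case (Suc n)
  obtain a b where "x = a @ b" "length a = 2 ^ n" "length b = 2 ^ n"
    using Suc.prems by (rule length_Suc_halves)
  with Suc.IH show ?case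
    by (auto intro!: nth_equalityI)
qed simp

lemma cd_conj_neg [simp]: "length x = 2 ^ n \<Longrightarrow> cd_conj n (cd_neg x) = cd_neg (cd_conj n x)"
  by (simp add: cd_neg_eq_scale)

lemma cd_conj_conj [simp]: "length x = 2 ^ n \<Longrightarrow> cd_conj n (cd_conj n x) = x"
proof (induction n arbitrary: x)
  case (Suc n)
  obtain a b where "x = a @ b" "length a = 2 ^ n" "length b = 2 ^ n"
    using Suc.prems by (rule length_Suc_halves)
  with Suc.IH show ?case
    by (auto intro!: nth_equalityI)
qed simp

lemma cd_conj_one [simp]: "cd_conj n (cd_one n) = cd_one n"
  by (induction n) (simp_all add: cd_one_0 cd_one_Suc cd_zero_def cd_neg_def)

lemma cd_mult_bilinear:
  "length x = 2 ^ n \<Longrightarrow> length y = 2 ^ n \<Longrightarrow> length z = 2 ^ n \<Longrightarrow>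
    cd_mult n (cd_add x y) z = cd_add (cd_mult n x z) (cd_mult n y z) \<and>
    cd_mult n z (cd_add x y) = cd_add (cd_mult n z x) (cd_mult n z y) \<and>
    cd_mult n (cd_scale c x) y = cd_scale c (cd_mult n x y) \<and>
    cd_mult n x (cd_scale c y) = cd_scale c (cd_mult n x y)"
proof (induction n arbitrary: x y z c)
  case 0
  then show ?case
    by (auto simp: length_Suc_conv cd_add_def cd_scale_def algebra_simps)
next
  case (Suc n)
  obtain a b where "x = a @ b" "length a = 2 ^ n" "length b = 2 ^ n"
    using Suc.prems(1) by (rule length_Suc_halves)
  moreover obtain u v where "y = u @ v" "length u = 2 ^ n" "length v = 2 ^ n"
    using Suc.prems(2) by (rule length_Suc_halves)
  moreover obtain s t where "z = s @ t" "length s = 2 ^ n" "length t = 2 ^ n"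
    using Suc.prems(3) by (rule length_Suc_halves)
  ultimately show ?case using Suc.IH
    by (simp, intro conjI nth_equalityI, simp_all add: algebra_simps)
qed

lemma cd_mult_add_left [simp]:
  "length x = 2 ^ n \<Longrightarrow> length y = 2 ^ n \<Longrightarrow> length z = 2 ^ n \<Longrightarrow>
    cd_mult n (cd_add x y) z = cd_add (cd_mult n x z) (cd_mult n y z)"
  using cd_mult_bilinear by blast

lemma cd_mult_add_right [simp]:
  "length x = 2 ^ n \<Longrightarrow> length y = 2 ^ n \<Longrightarrow> length z = 2 ^ n \<Longrightarrow>
    cd_mult n z (cd_add x y) = cd_add (cd_mult n z x) (cd_mult n z y)"
  using cd_mult_bilinear by blast

lemma cd_mult_scale_left [simp]:
  "length x = 2 ^ n \<Longrightarrow> length y = 2 ^ n \<Longrightarrow>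
    cd_mult n (cd_scale c x) y = cd_scale c (cd_mult n x y)"
  using cd_mult_bilinear by blast

lemma cd_mult_scale_right [simp]:
  "length x = 2 ^ n \<Longrightarrow> length y = 2 ^ n \<Longrightarrow>
    cd_mult n x (cd_scale c y) = cd_scale c (cd_mult n x y)"
  using cd_mult_bilinear by blast

lemma cd_mult_neg_left [simp]:
  "length x = 2 ^ n \<Longrightarrow> length y = 2 ^ n \<Longrightarrow> cd_mult n (cd_neg x) y = cd_neg (cd_mult n x y)"
  by (simp add: cd_neg_eq_scale)

lemma cd_mult_neg_right [simp]:
  "length x = 2 ^ n \<Longrightarrow> length y = 2 ^ n \<Longrightarrow> cd_mult n x (cd_neg y) = cd_neg (cd_mult n x y)"
  by (simp add: cd_neg_eq_scale)

lemma cd_zero_eq_scale: "length x = 2 ^ n \<Longrightarrow> cd_zero n = cd_scale 0 x"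
  by (intro nth_equalityI) simp_all

lemma cd_add_zero_left [simp]: "length x = 2 ^ n \<Longrightarrow> cd_add (cd_zero n) x = x"
  by (intro nth_equalityI) simp_all

lemma cd_add_zero_right [simp]: "length x = 2 ^ n \<Longrightarrow> cd_add x (cd_zero n) = x"
  by (intro nth_equalityI) simp_all

lemma cd_neg_zero [simp]: "cd_neg (cd_zero n) = cd_zero n"
  by (intro nth_equalityI) simp_all

lemma cd_conj_zero [simp]: "cd_conj n (cd_zero n) = cd_zero n"
  using cd_conj_scale[of "cd_zero n" n 0] by (simp flip: cd_zero_eq_scale)

lemma cd_mult_zero_left [simp]: "length y = 2 ^ n \<Longrightarrow> cd_mult n (cd_zero n) y = cd_zero n"
  using cd_mult_scale_left[of y n y 0] by (simp flip: cd_zero_eq_scale)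

lemma cd_mult_zero_right [simp]: "length y = 2 ^ n \<Longrightarrow> cd_mult n y (cd_zero n) = cd_zero n"
  using cd_mult_scale_right[of y n y 0] by (simp flip: cd_zero_eq_scale)

lemma cd_mult_one_right [simp]: "length x = 2 ^ n \<Longrightarrow> cd_mult n x (cd_one n) = x"
proof (induction n arbitrary: x)
  case 0
  then show ?case
    by (auto simp: length_Suc_conv cd_one_0)
next
  case (Suc n)
  obtain a b where "x = a @ b" "length a = 2 ^ n" "length b = 2 ^ n"
    using Suc.prems by (rule length_Suc_halves)
  with Suc.IH show ?case
    by (simp add: cd_one_Suc Let_def)
qed

lemma cd_mult_one_left [simp]: "length x = 2 ^ n \<Longrightarrow> cd_mult n (cd_one n) x = x"
proof (induction n arbitrary: x)
  case 0
  then show ?case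
    by (auto simp: length_Suc_conv cd_one_0)
next
  case (Suc n)
  obtain a b where "x = a @ b" "length a = 2 ^ n" "length b = 2 ^ n"
    using Suc.prems by (rule length_Suc_halves)
  with Suc.IH show ?case
    by (simp add: cd_one_Suc Let_def)
qed

lemma cd_conj_mult [simp]:
  "length x = 2 ^ n \<Longrightarrow> length y = 2 ^ n \<Longrightarrow>
    cd_conj n (cd_mult n x y) = cd_mult n (cd_conj n y) (cd_conj n x)"
proof (induction n arbitrary: x y)
  case 0
  then show ?case
    by (auto simp: length_Suc_conv)
next
  case (Suc n)
  obtain a b where "x = a @ b" "length a = 2 ^ n" "length b = 2 ^ n"
    using Suc.prems(1) by (rule length_Suc_halves)
  moreover obtain c d where "y = c @ d" "length c = 2 ^ n" "length d = 2 ^ n"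
    using Suc.prems(2) by (rule length_Suc_halves)
  ultimately show ?case using Suc.IH
    by (simp add: Let_def, intro conjI nth_equalityI, simp_all add: nth_append)
qed

lemma cd_conj_nth_0 [simp]: "length x = 2 ^ n \<Longrightarrow> cd_conj n x ! 0 = x ! 0"
proof (induction n arbitrary: x)
  case (Suc n)
  obtain a b where "x = a @ b" "length a = 2 ^ n" "length b = 2 ^ n"
    using Suc.prems by (rule length_Suc_halves)
  with Suc.IH show ?case
    by (simp add: nth_append)
qed simp

lemma cd_mult_nth_0_commute:
  "length x = 2 ^ n \<Longrightarrow> length y = 2 ^ n \<Longrightarrow> cd_mult n x y ! 0 = cd_mult n y x ! 0"
proof (induction n arbitrary: x y)
  case (Suc n)
  obtain a b where x: "x = a @ b" "length a = 2 ^ n" "length b = 2 ^ n"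
    using Suc.prems(1) by (rule length_Suc_halves)
  obtain c d where y: "y = c @ d" "length c = 2 ^ n" "length d = 2 ^ n"
    using Suc.prems(2) by (rule length_Suc_halves)
  have "cd_mult n (cd_conj n b) d ! 0 = cd_conj n (cd_mult n (cd_conj n d) b) ! 0"
    using x y by (simp del: cd_conj_nth_0)
  also have "\<dots> = cd_mult n (cd_conj n d) b ! 0"
    using x y by (intro cd_conj_nth_0) simp
  finally show ?case
    using x y Suc.IH by (simp add: nth_append)
qed simp

lemma cd_mult_nth_0_assoc:
  "length x = 2 ^ n \<Longrightarrow> length y = 2 ^ n \<Longrightarrow> length z = 2 ^ n \<Longrightarrow>
    cd_mult n (cd_mult n x y) z ! 0 = cd_mult n x (cd_mult n y z) ! 0"
proof (induction n arbitrary: x y z)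
  case (Suc n)
  obtain a b where x: "x = a @ b" "length a = 2 ^ n" "length b = 2 ^ n"
    using Suc.prems(1) by (rule length_Suc_halves)
  obtain c d where y: "y = c @ d" "length c = 2 ^ n" "length d = 2 ^ n"
    using Suc.prems(2) by (rule length_Suc_halves)
  obtain e f where z: "z = e @ f" "length e = 2 ^ n" "length f = 2 ^ n"
    using Suc.prems(3) by (rule length_Suc_halves)
  have cycle: "cd_mult n p (cd_mult n q r) ! 0 = cd_mult n q (cd_mult n r p) ! 0"
    if "length p = 2 ^ n" "length q = 2 ^ n" "length r = 2 ^ n" for p q r
    using that Suc.IH[of q r p] cd_mult_nth_0_commute[of p n "cd_mult n q r"] by simp
  text \<open>After reassociating with the induction hypothesis, the cross terms on both sides agree up
    to a cyclic permutation of their factors.\<close>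
  show ?case
    using x y z Suc.IH cycle[of "cd_conj n d" b e] cycle[of "cd_conj n f" d a]
      cycle[of d a "cd_conj n f"] cycle[of "cd_conj n f" b "cd_conj n c"]
      cycle[of b "cd_conj n c" "cd_conj n f"] cycle[of b e "cd_conj n d"]
    by (simp add: nth_append)
qed simp

lemma cd_inner_eq_sum: "length x = length y \<Longrightarrow> cd_inner x y = (\<Sum>i<length x. x ! i * y ! i)"
  by (simp add: cd_inner_def sum_list_sum_nth atLeast0LessThan)

lemma cd_inner_append [simp]:
  "length a = length c \<Longrightarrow> cd_inner (a @ b) (c @ d) = cd_inner a c + cd_inner b d"
  by (simp add: cd_inner_def)

lemma cd_inner_one: "length x = 2 ^ n \<Longrightarrow> cd_inner x (cd_one n) = x ! 0"
  by (simp add: cd_inner_eq_sum nth_cd_one if_distrib[of "(*) _"] sum.delta cong: if_cong)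

lemma cd_inner_add_left:
  "length x = length z \<Longrightarrow> length y = length z \<Longrightarrow>
    cd_inner (cd_add x y) z = cd_inner x z + cd_inner y z"
  by (simp add: cd_inner_eq_sum algebra_simps sum.distrib)

lemma cd_inner_scale_left: "length x = length z \<Longrightarrow> cd_inner (cd_scale c x) z = c * cd_inner x z"
  by (simp add: cd_inner_eq_sum sum_distrib_left mult.assoc)

lemma cd_inner_zero_left: "length z = 2 ^ n \<Longrightarrow> cd_inner (cd_zero n) z = 0"
  by (simp add: cd_inner_eq_sum)

lemma cd_inner_eq_nth_0_mult_conj:
  "length x = 2 ^ n \<Longrightarrow> length y = 2 ^ n \<Longrightarrow> cd_inner x y = cd_mult n x (cd_conj n y) ! 0"
proof (induction n arbitrary: x y)
  case 0
  then show ?case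
    by (auto simp: length_Suc_conv cd_inner_def)
next
  case (Suc n)
  obtain a b where x: "x = a @ b" "length a = 2 ^ n" "length b = 2 ^ n"
    using Suc.prems(1) by (rule length_Suc_halves)
  obtain c d where y: "y = c @ d" "length c = 2 ^ n" "length d = 2 ^ n"
    using Suc.prems(2) by (rule length_Suc_halves)
  have "cd_inner b d = cd_mult n (cd_conj n d) b ! 0"
    using x y Suc.IH[of b d] by (simp add: cd_mult_nth_0_commute)
  then show ?case
    using x y Suc.IH[of a c] by (simp add: Let_def nth_append)
qed

lemma cd_add_conj_self:
  "length x = 2 ^ n \<Longrightarrow> cd_add x (cd_conj n x) = cd_scale (2 * x ! 0) (cd_one n)"
proof (induction n arbitrary: x)
  case 0
  then show ?case
    by (auto simp: length_Suc_conv cd_one_0 cd_add_def cd_scale_def)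
next
  case (Suc n)
  obtain a b where "x = a @ b" "length a = 2 ^ n" "length b = 2 ^ n"
    using Suc.prems by (rule length_Suc_halves)
  with Suc.IH[of a] show ?case
    by (simp add: cd_one_Suc nth_append, intro nth_equalityI, simp_all)
qed

lemma cd_mult_conj_self:
  "length x = 2 ^ n \<Longrightarrow> cd_mult n (cd_conj n x) x = cd_scale (cd_inner x x) (cd_one n)"
proof (induction n arbitrary: x)
  case 0
  then show ?case
    by (auto simp: length_Suc_conv cd_one_0 cd_inner_def cd_scale_def)
next
  case (Suc n)
  obtain a b where "x = a @ b" "length a = 2 ^ n" "length b = 2 ^ n"
    using Suc.prems by (rule length_Suc_halves)
  with Suc.IH[of a] Suc.IH[of b] show ?case
    by (simp add: cd_one_Suc Let_def, intro conjI nth_equalityI, simp_all add: algebra_simps)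
qed

lemma cd_inner_self_pos:
  assumes "length v = 2 ^ n" and "v \<noteq> cd_zero n"
  shows "cd_inner v v > 0"
proof -
  obtain j where j: "j < 2 ^ n" "v ! j \<noteq> 0"
    using assms by (metis length_cd_zero nth_cd_zero nth_equalityI)
  have "cd_inner v v = (\<Sum>i<2 ^ n. v ! i * v ! i)"
    using assms(1) by (simp add: cd_inner_eq_sum)
  also have "\<dots> > 0"
    using j by (intro sum_pos2[of _ j]) (auto simp: zero_less_mult_iff linorder_neq_iff)
  finally show ?thesis .
qed

section \<open>Complex polynomials and the Gauss--Lucas theorem\<close>

lemma poly_Poly_eq_sum:
  fixes z :: "'a::comm_semiring_1"
  shows "poly (Poly xs) z = (\<Sum>k<length xs. xs ! k * z ^ k)"
proof (induction xs)
  case (Cons a xs)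
  have "(\<Sum>k<length (a # xs). (a # xs) ! k * z ^ k) = a + z * (\<Sum>k<length xs. xs ! k * z ^ k)"
    unfolding length_Cons sum.lessThan_Suc_shift by (simp add: sum_distrib_left algebra_simps)
  with Cons show ?case
    by simp
qed simp

lemma poly_pderiv_linear_factors:
  fixes a :: "'i \<Rightarrow> 'a::field"
  assumes "finite S" and "\<forall>i\<in>S. z \<noteq> a i"
  shows "poly (pderiv (\<Prod>i\<in>S. [:-a i, 1:])) z
           = poly (\<Prod>i\<in>S. [:-a i, 1:]) z * (\<Sum>i\<in>S. 1 / (z - a i))"
proof -
  have "poly (pderiv (\<Prod>i\<in>S. [:-a i, 1:])) z = (\<Sum>i\<in>S. \<Prod>j\<in>S - {i}. z - a j)"
    by (simp add: pderiv_prod pderiv_pCons poly_sum poly_prod)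
  also have "\<dots> = (\<Sum>i\<in>S. (\<Prod>j\<in>S. z - a j) / (z - a i))"
    using assms by (intro sum.cong refl) (simp add: prod_diff1)
  finally show ?thesis
    by (simp add: poly_prod sum_distrib_left)
qed

theorem gauss_lucas:
  fixes p :: "complex poly"
  assumes "degree p > 0" and "poly (pderiv p) z = 0"
  shows "z \<in> convex hull {w. poly p w = 0}"
proof (cases "poly p z = 0")
  case True
  then show ?thesis by (simp add: hull_inc)
next
  case False
  define d where "d = degree p"
  obtain root where p_eq: "p = smult (lead_coeff p) (\<Prod>i<d. [:-root i, 1:])"
    unfolding d_def by (metis complex_poly_decompose')
  have roots: "poly p (root i) = 0" if "i < d" for i
    using that by (subst p_eq) (auto simp: poly_prod)
  with False have z_ne: "\<forall>i\<in>{..<d}. z \<noteq> root i"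
    by auto
  define w where "w i = 1 / (cmod (z - root i))\<^sup>2" for i
  have w_pos: "w i > 0" if "i < d" for i
    using z_ne that by (simp add: w_def)
  have "poly (pderiv p) z = poly p z * (\<Sum>i<d. 1 / (z - root i))"
    by (subst (1 2) p_eq) (simp add: pderiv_smult poly_pderiv_linear_factors[OF _ z_ne])
  with assms(2) False have sum_inverse: "(\<Sum>i<d. 1 / (z - root i)) = 0"
    by simp
  have cnj_inverse: "cnj (1 / v) = of_real (1 / (cmod v)\<^sup>2) * v" if "v \<noteq> 0" for v :: complex
    using that by (simp add: complex_div_cnj[of 1 v])
  text \<open>Conjugating exhibits \<open>z\<close> as a mean of the roots with the positive weights \<open>w\<close>.\<close>
  have "(\<Sum>i<d. of_real (w i) * (z - root i)) = cnj (\<Sum>i<d. 1 / (z - root i))"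
    using z_ne unfolding w_def cnj_sum by (intro sum.cong refl cnj_inverse[symmetric]) auto
  then have balance: "(\<Sum>i<d. of_real (w i) * (z - root i)) = 0"
    by (simp add: sum_inverse)
  define W where "W = sum w {..<d}"
  have W_pos: "W > 0"
    unfolding W_def using assms(1) w_pos by (intro sum_pos) (auto simp: d_def)
  have "of_real W * z = (\<Sum>i<d. of_real (w i) * root i)"
    using balance by (simp add: W_def algebra_simps sum_subtractf sum_distrib_left)
  then have "z = (\<Sum>i<d. (w i / W) *\<^sub>R root i)"
    using W_pos by (simp add: scaleR_conv_of_real field_simps flip: sum_divide_distrib)
  also have "\<dots> \<in> convex hull {w. poly p w = 0}"
    using W_pos w_pos roots
    by (intro convex_sum) (auto simp: W_def hull_inc less_imp_le simp flip: sum_divide_distrib)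
  finally show ?thesis .
qed

section \<open>Complex lines through imaginary units\<close>

locale cd_imaginary_unit =
  fixes n :: nat and J :: "real list"
  assumes length_J [simp]: "length J = 2 ^ n"
    and J_nth_0 [simp]: "J ! 0 = 0"
    and inner_J_J: "cd_inner J J = 1"
begin

lemma conj_J: "cd_conj n J = cd_neg J"
proof (rule nth_equalityI)
  fix i
  assume "i < length (cd_conj n J)"
  then have "i < 2 ^ n"
    by simp
  moreover have "cd_add J (cd_conj n J) ! i = cd_scale 0 (cd_one n) ! i"
    using cd_add_conj_self[of J n] by simp
  ultimately show "cd_conj n J ! i = cd_neg J ! i"
    by simp
qed simp

lemma mult_conj_J_J: "cd_mult n (cd_conj n J) J = cd_one n"
  using cd_mult_conj_self[of J n] by (simp add: inner_J_J, intro nth_equalityI, simp_all)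

lemma J_in_cd_units: "J \<in> cd_units n"
proof -
  have "cd_trace n J = cd_zero n"
    unfolding cd_trace_def conj_J by (intro nth_equalityI) simp_all
  then show ?thesis
    using mult_conj_J_J by (simp add: cd_units_def cd_carrier_def cd_norm_def)
qed

lemma mult_J_J: "cd_mult n J J = cd_neg (cd_one n)"
  using mult_conj_J_J by (metis cd_mult_neg_left cd_neg_neg conj_J length_J)

lemma inner_mult_J_one: "length x = 2 ^ n \<Longrightarrow> cd_inner (cd_mult n x J) (cd_one n) = - cd_inner x J"
  by (simp add: cd_inner_one cd_inner_eq_nth_0_mult_conj conj_J)

lemma inner_mult_J_J: "length x = 2 ^ n \<Longrightarrow> cd_inner (cd_mult n x J) J = cd_inner x (cd_one n)"
proof -
  assume x: "length x = 2 ^ n"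
  have "cd_inner (cd_mult n x J) J = - cd_mult n (cd_mult n x J) J ! 0"
    using x by (simp add: cd_inner_eq_nth_0_mult_conj conj_J)
  also have "\<dots> = - cd_mult n x (cd_mult n J J) ! 0"
    using x by (simp add: cd_mult_nth_0_assoc)
  also have "\<dots> = cd_inner x (cd_one n)"
    using x by (simp add: mult_J_J cd_inner_one)
  finally show ?thesis .
qed

lemma embed_mult: "cd_mult n (cd_embed n J z) (cd_embed n J w) = cd_embed n J (z * w)"
  unfolding cd_embed_def by (simp add: mult_J_J, intro nth_equalityI, simp_all add: algebra_simps)

lemma pow_embed: "cd_pow n (cd_embed n J z) k = cd_embed n J (z ^ k)"
proof (induction k)
  case 0
  show ?case
    unfolding cd_embed_def by (simp, intro nth_equalityI, simp_all)
qed (simp add: embed_mult)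

lemma proj_coord_add:
  "length x = 2 ^ n \<Longrightarrow> length y = 2 ^ n \<Longrightarrow>
    cd_proj_coord n J (cd_add x y) = cd_proj_coord n J x + cd_proj_coord n J y"
  by (simp add: cd_proj_coord_def cd_inner_add_left complex_eq_iff)

lemma proj_coord_scale:
  "length x = 2 ^ n \<Longrightarrow> cd_proj_coord n J (cd_scale c x) = of_real c * cd_proj_coord n J x"
  by (simp add: cd_proj_coord_def cd_inner_scale_left complex_eq_iff)

lemma proj_coord_zero: "cd_proj_coord n J (cd_zero n) = 0"
  by (simp add: cd_proj_coord_def cd_inner_zero_left complex_eq_iff)

lemma proj_coord_mult_embed:
  assumes "length x = 2 ^ n"
  shows "cd_proj_coord n J (cd_mult n x (cd_embed n J w)) = cd_proj_coord n J x * w"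
proof -
  have "cd_mult n x (cd_embed n J w) = cd_add (cd_scale (Re w) x) (cd_scale (Im w) (cd_mult n x J))"
    using assms unfolding cd_embed_def by simp
  then show ?thesis
    using assms
    by (simp add: cd_proj_coord_def cd_inner_add_left cd_inner_scale_left inner_mult_J_one
        inner_mult_J_J complex_eq_iff algebra_simps)
qed

lemma proj_coord_foldr_add:
  "\<forall>y\<in>set ys. length y = 2 ^ n \<Longrightarrow>
    cd_proj_coord n J (foldr cd_add ys (cd_zero n)) = (\<Sum>y\<leftarrow>ys. cd_proj_coord n J y)"
proof (induction ys)
  case (Cons y ys)
  have "length (foldr cd_add ys (cd_zero n)) = 2 ^ n"
    using Cons.prems by (induction ys) simp_all
  with Cons show ?case
    by (simp add: proj_coord_add)
qed (simp add: proj_coord_zero)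

lemma proj_coord_eval_embed:
  assumes "\<forall>g\<in>set gs. length g = 2 ^ n"
  shows "cd_proj_coord n J (cd_eval n gs (cd_embed n J z)) = poly (Poly (map (cd_proj_coord n J) gs)) z"
proof -
  have "cd_proj_coord n J (cd_eval n gs (cd_embed n J z))
      = (\<Sum>k\<leftarrow>[0..<length gs]. cd_proj_coord n J (cd_mult n (gs ! k) (cd_embed n J (z ^ k))))"
    unfolding cd_eval_def pow_embed by (subst proj_coord_foldr_add) (simp_all add: comp_def)
  also have "\<dots> = (\<Sum>k<length gs. cd_proj_coord n J (gs ! k) * z ^ k)"
    using assms by (simp add: proj_coord_mult_embed sum_list_sum_nth atLeast0LessThan)
  finally show ?thesis
    by (simp add: poly_Poly_eq_sum)
qed

lemma pderiv_cd_fI: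
  assumes "\<forall>a\<in>set fs. length a = 2 ^ n"
  shows "pderiv (cd_fI n J fs) = Poly (map (cd_proj_coord n J) (cd_pderiv fs))"
proof (rule poly_eqI)
  fix i
  show "coeff (pderiv (cd_fI n J fs)) i = coeff (Poly (map (cd_proj_coord n J) (cd_pderiv fs))) i"
    using assms
    by (cases "Suc i < length fs")
       (simp_all add: coeff_pderiv cd_fI_def cd_pderiv_def nth_default_def proj_coord_scale)
qed

lemma proj_coord_eval_pderiv_embed:
  assumes "\<forall>a\<in>set fs. length a = 2 ^ n"
  shows "cd_proj_coord n J (cd_eval n (cd_pderiv fs) (cd_embed n J z)) = poly (pderiv (cd_fI n J fs)) z"
proof -
  have "\<forall>g\<in>set (cd_pderiv fs). length g = 2 ^ n"
    using assms by (auto simp: cd_pderiv_def)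
  then show ?thesis
    unfolding pderiv_cd_fI[OF assms] by (rule proj_coord_eval_embed)
qed

lemma embed_in_cd_snail:
  assumes "poly (pderiv (cd_fI n J fs)) z = 0"
  shows "cd_embed n J z \<in> cd_snail n fs"
proof -
  have "cd_embed n J z \<in> cd_K n J fs"
    using gauss_lucas[OF _ assms] by (simp add: cd_K_def)
  then show ?thesis
    using J_in_cd_units by (auto simp: cd_snail_def)
qed

end

lemma cd_imaginary_unit_basis:
  assumes "n \<ge> 1"
  shows "cd_imaginary_unit n ((cd_zero n)[1 := 1])"
proof
  have "(1::nat) < 2 ^ n"
    using assms by (intro one_less_power) auto
  then show "(cd_zero n)[1 := 1] ! 0 = 0" and "cd_inner ((cd_zero n)[1 := 1]) ((cd_zero n)[1 := 1]) = 1"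
    by (simp_all add: cd_inner_eq_sum nth_list_update if_distrib[of "\<lambda>x. x * _"] sum.delta cong: if_cong)
qed simp

lemma cd_imaginary_unit_normalize:
  assumes "length v = 2 ^ n" and "v ! 0 = 0" and "v \<noteq> cd_zero n"
  shows "cd_imaginary_unit n (cd_scale (1 / sqrt (cd_inner v v)) v)"
proof
  have "cd_inner v v > 0"
    using assms(1,3) by (rule cd_inner_self_pos)
  moreover have "cd_inner (cd_scale c v) (cd_scale c v) = c * c * cd_inner v v" for c
    using assms(1) by (simp add: cd_inner_eq_sum sum_distrib_left algebra_simps)
  ultimately show "cd_inner (cd_scale (1 / sqrt (cd_inner v v)) v) (cd_scale (1 / sqrt (cd_inner v v)) v) = 1"
    by simp
qed (use assms in simp_all)

lemma ex_cd_imaginary_unit_scale: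
  assumes "n \<ge> 1" and "length v = 2 ^ n" and "v ! 0 = 0"
  obtains J s where "cd_imaginary_unit n J" and "v = cd_scale s J"
proof (cases "v = cd_zero n")
  case True
  then have "v = cd_scale 0 ((cd_zero n)[1 := 1])"
    by (intro nth_equalityI) simp_all
  then show ?thesis
    using that cd_imaginary_unit_basis[OF assms(1)] by blast
next
  case False
  have "cd_inner v v > 0"
    using assms(2) False by (rule cd_inner_self_pos)
  then have "v = cd_scale (sqrt (cd_inner v v)) (cd_scale (1 / sqrt (cd_inner v v)) v)"
    by (intro nth_equalityI) simp_all
  then show ?thesis
    using that cd_imaginary_unit_normalize[OF assms(2,3) False] by blast
qed

lemma ex_cd_imaginary_unit_embed:
  assumes "n \<ge> 1" and "length r = 2 ^ n"
  obtains J z where "cd_imaginary_unit n J" and "r = cd_embed n J z"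
proof -
  define v where "v = cd_add r (cd_scale (- r ! 0) (cd_one n))"
  have "length v = 2 ^ n" and "v ! 0 = 0"
    using assms(2) by (simp_all add: v_def nth_cd_one)
  then obtain J s where J: "cd_imaginary_unit n J" and v_eq: "v = cd_scale s J"
    using assms(1) ex_cd_imaginary_unit_scale by blast
  have "r = cd_add (cd_scale (r ! 0) (cd_one n)) v"
    using assms(2) by (intro nth_equalityI) (simp_all add: v_def)
  then have "r = cd_embed n J (Complex (r ! 0) s)"
    by (simp add: cd_embed_def v_eq)
  with J show ?thesis
    by (rule that)
qed

theorem theorem4p8:
  fixes n :: nat and fs :: "real list list" and r :: "real list"
  assumes "n \<ge> 1"
    and "\<forall>a \<in> set fs. a \<in> cd_carrier n"
    and "r \<in> cd_carrier n"
    and "cd_eval n (cd_pderiv fs) r = cd_zero n"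
  shows "r \<in> cd_snail n fs"
proof -
  have fs: "\<forall>a\<in>set fs. length a = 2 ^ n" and r: "length r = 2 ^ n"
    using assms(2,3) by (simp_all add: cd_carrier_def)
  obtain J z where J: "cd_imaginary_unit n J" and r_eq: "r = cd_embed n J z"
    using ex_cd_imaginary_unit_embed[OF assms(1) r] .
  interpret cd_imaginary_unit n J
    by (fact J)
  have "poly (pderiv (cd_fI n J fs)) z = 0"
    using proj_coord_eval_pderiv_embed[OF fs, of z] assms(4) by (simp add: r_eq proj_coord_zero)
  then show ?thesis
    unfolding r_eq by (rule embed_in_cd_snail)
qed

end
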